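(* For every Tychonoff space $X$, the following are equivalent: (1) $C_p(X)\models U_{fin}(\Gamma_f,\Omega_f)$ for every $f\in C_p(X)$; (2) $X\models U_{fin}(\Gamma_F,\Omega)$.
   Context: All spaces are Tychonoff; $C_p(X)$ is $C(X)$ with pointwise convergence topology; basic neighbourhoods are $\langle f,K,\varepsilon\rangle=\{g\in C(X):|g(x)-f(x)|<\varepsilon\ \forall x\in K\}$, $K\subseteq X$ finite, $\varepsilon>0$. For $f\in C_p(X)$, $\Gamma_f$ is the family of infinite $A\subseteq C(X)$ with $f\notin A$ such that every neighbourhood of $f$ contains all but finitely many elements of $A$. $C_p(X)\models U_{fin}(\Gamma_f,\Omega_f)$ means: for every sequence $(S_n)_{n\in\omega}$ of elements of $\Gamma_f$ there are finite $\mathcal F_n\subseteq S_n$ such that for every finite $K=\{x_1,\dots,x_k\}\subseteq X$ and $\varepsilon>0$ there is $n$ such that for each $j\le k$ some $g\in\mathcal F_n$ satisfies $|g(x_j)-f(x_j)|<\varepsilon$. Zero-set: $g^{-1}(0)$, $g\in C(X)$; cozero-set: its complement. A cover $\mathcal U$ of $X$ always means $X=\bigcup\mathcal U$, $X\notin\mathcal U$; $\gamma$-cover: infinite, each point in all but finitely many members. $\Gamma_F$: $\gamma$-covers $\mathcal U$ of $X$ by cozero-sets for which there are zero-sets $F(U)\subseteq U$ ($U\in\mathcal U$) with $\{F(U):U\in\mathcal U\}$ a $\gamma$-cover of $X$. $X\models U_{fin}(\Gamma_F,\Omega)$ means: whenever $\mathcal U_n\in\Gamma_F$ ($n\in\omega$)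 and no $\mathcal U_n$ contains a finite subcover, there are finite $\mathcal F_n\subseteq\mathcal U_n$ such that every finite subset of $X$ is contained in $\bigcup\mathcal F_n$ for some $n$ (i.e. $\{\bigcup\mathcal F_n:n\in\omega\}$ is an $\omega$-cover). *)

theory Defs
  imports "HOL-Analysis.Analysis"
begin

definition tychonoff_space :: "'a topology \<Rightarrow> bool" where
  "tychonoff_space X \<longleftrightarrow> completely_regular_space X \<and> Hausdorff_space X"

text \<open>C(X): continuous real functions on X, normalised to 0 outside the carrier
  so that each element of C(X) is represented by exactly one HOL function.\<close>
definition Cfun :: "'a topology \<Rightarrow> ('a \<Rightarrow> real) set" where
  "Cfun X = {f. continuous_map X euclideanreal f \<and> (\<forall>x. x \<notin> topspace X \<longrightarrow> f x = 0)}"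

definition cp_nbhd :: "'a topology \<Rightarrow> ('a \<Rightarrow> real) \<Rightarrow> 'a set \<Rightarrow> real \<Rightarrow> ('a \<Rightarrow> real) set" where
  "cp_nbhd X f K \<epsilon> = {g \<in> Cfun X. \<forall>x\<in>K. \<bar>g x - f x\<bar> < \<epsilon>}"

text \<open>Gamma_f: infinite sequences-as-sets in C(X) not containing f and converging to f
  in C_p(X) (every basic neighbourhood contains all but finitely many elements).\<close>
definition Gamma_f :: "'a topology \<Rightarrow> ('a \<Rightarrow> real) \<Rightarrow> ('a \<Rightarrow> real) set set" where
  "Gamma_f X f = {A. infinite A \<and> A \<subseteq> Cfun X \<and> f \<notin> A \<and>
     (\<forall>K \<epsilon>. finite K \<and> K \<subseteq> topspace X \<and> \<epsilon> > 0 \<longrightarrow> finite (A - cp_nbhd X f K \<epsilon>))}"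

definition Cp_Ufin_Gamma_Omega :: "'a topology \<Rightarrow> ('a \<Rightarrow> real) \<Rightarrow> bool" where
  "Cp_Ufin_Gamma_Omega X f \<longleftrightarrow>
     (\<forall>S :: nat \<Rightarrow> ('a \<Rightarrow> real) set. (\<forall>n. S n \<in> Gamma_f X f) \<longrightarrow>
        (\<exists>F :: nat \<Rightarrow> ('a \<Rightarrow> real) set. (\<forall>n. finite (F n) \<and> F n \<subseteq> S n) \<and>
           (\<forall>K \<epsilon>. finite K \<and> K \<subseteq> topspace X \<and> \<epsilon> > 0 \<longrightarrow>
              (\<exists>n. \<forall>x\<in>K. \<exists>g\<in>F n. \<bar>g x - f x\<bar> < \<epsilon>))))"

definition zero_set :: "'a topology \<Rightarrow> 'a set \<Rightarrow> bool" where
  "zero_set X Z \<longleftrightarrow> (\<exists>g. continuous_map X euclideanreal g \<and> Z = {x \<in> topspace X. g x = 0})"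

definition cozero_set :: "'a topology \<Rightarrow> 'a set \<Rightarrow> bool" where
  "cozero_set X U \<longleftrightarrow> (\<exists>g. continuous_map X euclideanreal g \<and> U = {x \<in> topspace X. g x \<noteq> 0})"

definition is_cover :: "'a topology \<Rightarrow> 'a set set \<Rightarrow> bool" where
  "is_cover X \<U> \<longleftrightarrow> \<Union>\<U> = topspace X \<and> topspace X \<notin> \<U>"

definition gamma_cover :: "'a topology \<Rightarrow> 'a set set \<Rightarrow> bool" where
  "gamma_cover X \<U> \<longleftrightarrow> is_cover X \<U> \<and> infinite \<U> \<and>
     (\<forall>x\<in>topspace X. finite {U \<in> \<U>. x \<notin> U})"

definition Gamma_F :: "'a topology \<Rightarrow> 'a set set set" where
  "Gamma_F X = {\<U>. gamma_cover X \<U> \<and> (\<forall>U\<in>\<U>. cozero_set X U) \<and>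
     (\<exists>F. (\<forall>U\<in>\<U>. zero_set X (F U) \<and> F U \<subseteq> U) \<and> gamma_cover X (F ` \<U>))}"

definition X_Ufin_GammaF_Omega :: "'a topology \<Rightarrow> bool" where
  "X_Ufin_GammaF_Omega X \<longleftrightarrow>
     (\<forall>\<U> :: nat \<Rightarrow> 'a set set.
        (\<forall>n. \<U> n \<in> Gamma_F X \<and> \<not> (\<exists>\<V>. \<V> \<subseteq> \<U> n \<and> finite \<V> \<and> \<Union>\<V> = topspace X)) \<longrightarrow>
        (\<exists>F :: nat \<Rightarrow> 'a set set. (\<forall>n. finite (F n) \<and> F n \<subseteq> \<U> n) \<and>
           (\<forall>K. finite K \<and> K \<subseteq> topspace X \<longrightarrow> (\<exists>n. K \<subseteq> \<Union>(F n)))))"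

end

theory Submission
  imports Defs
begin

text \<open>
  (1) \<Longrightarrow> (2) needs only \<open>f = 0\<close>. For a cozero-set \<open>U\<close> containing a zero-set \<open>Z\<close> there is
  \<open>h \<in> C(X)\<close> vanishing exactly on \<open>Z\<close> and equal to \<open>1\<close> off \<open>U\<close>. If the zero-sets \<open>F(U)\<close> of a
  member of \<open>\<Gamma>\<^sub>F\<close> form a \<open>\<gamma>\<close>-cover, these functions converge pointwise to \<open>0\<close>, and a selected
  \<open>h\<close> with \<open>\<bar>h x\<bar> < 1\<close> certifies \<open>x \<in> U\<close>.

  (2) \<Longrightarrow> (1): for \<open>S\<^sub>n \<rightarrow> f\<close> the sets \<open>{x. \<bar>g x - f x\<bar> < 1/(n+1)}\<close>, \<open>g \<in> S\<^sub>n\<close>, form a cover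
  that either has a finite subcover or lies in \<open>\<Gamma>\<^sub>F\<close>, witnessed by the zero-sets
  \<open>{x. \<bar>g x - f x\<bar> \<le> 1/(2n+2)}\<close>. Selecting from these covers along arbitrarily late indices
  yields finite \<open>F\<^sub>n \<subseteq> S\<^sub>n\<close> approximating \<open>f\<close> on every finite set to any precision.
\<close>

definition has_finite_subcover :: "'a topology \<Rightarrow> 'a set set \<Rightarrow> bool" where
  "has_finite_subcover X \<U> \<longleftrightarrow> (\<exists>\<V>. \<V> \<subseteq> \<U> \<and> finite \<V> \<and> \<Union>\<V> = topspace X)"

definition close_points :: "'a topology \<Rightarrow> ('a \<Rightarrow> real) \<Rightarrow> real \<Rightarrow> ('a \<Rightarrow> real) \<Rightarrow> 'a set" where
  "close_points X f \<epsilon> g = {x \<in> topspace X. \<bar>g x - f x\<bar> < \<epsilon>}"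

lemma restrict_in_Cfun:
  assumes "continuous_map X euclideanreal h"
  shows "(\<lambda>x. if x \<in> topspace X then h x else 0) \<in> Cfun X"
  unfolding Cfun_def using continuous_map_eq[OF assms] by auto

lemma cozero_set_sublevel:
  assumes "continuous_map X euclideanreal h"
  shows "cozero_set X {x \<in> topspace X. h x < c}"
proof -
  have "continuous_map X euclideanreal (\<lambda>x. max 0 (c - h x))"
    by (intro continuous_intros assms)
  moreover have "{x \<in> topspace X. h x < c} = {x \<in> topspace X. max 0 (c - h x) \<noteq> 0}"
    by auto
  ultimately show ?thesis unfolding cozero_set_def by blast
qed

lemma zero_set_sublevel:
  assumes "continuous_map X euclideanreal h"
  shows "zero_set X {x \<in> topspace X. h x \<le> c}"
proof -
  have "continuous_map X euclideanreal (\<lambda>x. max 0 (h x - c))"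
    by (intro continuous_intros assms)
  moreover have "{x \<in> topspace X. h x \<le> c} = {x \<in> topspace X. max 0 (h x - c) = 0}"
    by auto
  ultimately show ?thesis unfolding zero_set_def by blast
qed

lemma zero_set_separating_function:
  assumes "cozero_set X U" "zero_set X Z" "Z \<subseteq> U"
  shows "\<exists>h \<in> Cfun X. {x \<in> topspace X. h x = 0} = Z \<and> (\<forall>x\<in>topspace X - U. h x = 1)"
proof -
  obtain g where g: "continuous_map X euclideanreal g" "U = {x \<in> topspace X. g x \<noteq> 0}"
    using assms(1) unfolding cozero_set_def by blast
  obtain k where k: "continuous_map X euclideanreal k" "Z = {x \<in> topspace X. k x = 0}"
    using assms(2) unfolding zero_set_def by blast
  have pos: "\<bar>k x\<bar> + \<bar>g x\<bar> > 0" if "x \<in> topspace X" for x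
  proof -
    have "k x \<noteq> 0 \<or> g x \<noteq> 0" using that assms(3) g k by auto
    then show ?thesis by (metis abs_ge_zero add_nonneg_pos add_pos_nonneg zero_less_abs_iff)
  qed
  define h where "h x = (if x \<in> topspace X then \<bar>k x\<bar> / (\<bar>k x\<bar> + \<bar>g x\<bar>) else 0)" for x
  have "continuous_map X euclideanreal (\<lambda>x. \<bar>k x\<bar> / (\<bar>k x\<bar> + \<bar>g x\<bar>))"
    using pos by (intro continuous_intros g k) fastforce
  then have "h \<in> Cfun X"
    unfolding h_def by (rule restrict_in_Cfun)
  moreover have "h x = 0 \<longleftrightarrow> k x = 0" if "x \<in> topspace X" for x
    using pos[OF that] that by (simp add: h_def)
  then have "{x \<in> topspace X. h x = 0} = Z"
    by (auto simp: k(2))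
  moreover have "h x = 1" if "x \<in> topspace X - U" for x
    using pos[of x] that by (simp add: h_def g(2))
  ultimately show ?thesis by blast
qed

lemma gamma_cover_zero_sets_Gamma_f:
  assumes \<Z>: "gamma_cover X \<Z>"
    and h: "\<And>Z. Z \<in> \<Z> \<Longrightarrow> h Z \<in> Cfun X" "\<And>Z. Z \<in> \<Z> \<Longrightarrow> {x \<in> topspace X. h Z x = 0} = Z"
  shows "h ` \<Z> \<in> Gamma_f X (\<lambda>x. 0)"
  unfolding Gamma_f_def
proof (intro CollectI conjI allI impI)
  have "inj_on h \<Z>"
    by (rule inj_onI) (metis h(2))
  then show "infinite (h ` \<Z>)"
    using \<Z> by (simp add: gamma_cover_def finite_image_iff)
  show "h ` \<Z> \<subseteq> Cfun X"
    using h(1) by blast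
  show "(\<lambda>x. 0) \<notin> h ` \<Z>"
  proof
    assume "(\<lambda>x. 0) \<in> h ` \<Z>"
    then obtain Z where Z: "(\<lambda>x. 0) = h Z" "Z \<in> \<Z>"
      by (rule imageE)
    then have "topspace X = Z"
      using h(2)[OF Z(2)] Z(1)[symmetric] by simp
    with Z(2) have "topspace X \<in> \<Z>" by simp
    with \<Z> show False
      by (simp add: gamma_cover_def is_cover_def)
  qed
  fix K and \<epsilon> :: real
  assume K: "finite K \<and> K \<subseteq> topspace X \<and> \<epsilon> > 0"
  show "finite (h ` \<Z> - cp_nbhd X (\<lambda>x. 0) K \<epsilon>)"
  proof (rule finite_subset)
    show "h ` \<Z> - cp_nbhd X (\<lambda>x. 0) K \<epsilon> \<subseteq> h ` (\<Union>x\<in>K. {Z \<in> \<Z>. x \<notin> Z})"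
    proof
      fix g assume g: "g \<in> h ` \<Z> - cp_nbhd X (\<lambda>x. 0) K \<epsilon>"
      then obtain Z where Z: "g = h Z" "Z \<in> \<Z>"
        by (blast elim: imageE)
      then obtain x where x: "x \<in> K" "\<not> \<bar>g x - 0\<bar> < \<epsilon>"
        using g h(1) unfolding cp_nbhd_def by blast
      have "x \<notin> Z"
      proof
        assume "x \<in> Z"
        then have "g x = 0" using h(2)[OF Z(2)] Z(1) by blast
        with x(2) K show False by simp
      qed
      with x Z show "g \<in> h ` (\<Union>x\<in>K. {Z \<in> \<Z>. x \<notin> Z})" by blast
    qed
    show "finite (h ` (\<Union>x\<in>K. {Z \<in> \<Z>. x \<notin> Z}))"
      using K \<Z> unfolding gamma_cover_def by (intro finite_imageI finite_UN_I) auto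
  qed
qed
lemma Gamma_F_separating_functions:
  assumes "\<U> \<in> Gamma_F X"
  obtains S sel where "S \<in> Gamma_f X (\<lambda>x. 0)" "\<And>g. g \<in> S \<Longrightarrow> sel g \<in> \<U>"
    and "\<And>g x. g \<in> S \<Longrightarrow> x \<in> topspace X \<Longrightarrow> \<bar>g x\<bar> < 1 \<Longrightarrow> x \<in> sel g"
proof -
  obtain Z where Z_sub: "\<And>U. U \<in> \<U> \<Longrightarrow> zero_set X (Z U) \<and> Z U \<subseteq> U"
    and Z_cover: "gamma_cover X (Z ` \<U>)"
    using assms unfolding Gamma_F_def by blast
  define rep where "rep V = inv_into \<U> Z V" for V
  have rep: "rep V \<in> \<U>" "Z (rep V) = V" if "V \<in> Z ` \<U>" for V
    using that unfolding rep_def by (simp_all add: inv_into_into f_inv_into_f)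
  have "\<forall>V\<in>Z ` \<U>. \<exists>h\<in>Cfun X. {x \<in> topspace X. h x = 0} = V \<and> (\<forall>x\<in>topspace X - rep V. h x = 1)"
  proof
    fix V assume V: "V \<in> Z ` \<U>"
    have "cozero_set X (rep V)"
      using assms rep(1)[OF V] by (simp add: Gamma_F_def)
    moreover have "zero_set X V" "V \<subseteq> rep V"
      using Z_sub[OF rep(1)[OF V]] rep(2)[OF V] by simp_all
    ultimately show "\<exists>h\<in>Cfun X. {x \<in> topspace X. h x = 0} = V \<and> (\<forall>x\<in>topspace X - rep V. h x = 1)"
      by (rule zero_set_separating_function)
  qed
  then obtain h where h: "\<And>V. V \<in> Z ` \<U> \<Longrightarrow> h V \<in> Cfun X"
      "\<And>V. V \<in> Z ` \<U> \<Longrightarrow> {x \<in> topspace X. h V x = 0} = V"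
      "\<And>V x. V \<in> Z ` \<U> \<Longrightarrow> x \<in> topspace X - rep V \<Longrightarrow> h V x = 1"
    by metis
  define sel where "sel g = rep (inv_into (Z ` \<U>) h g)" for g
  have inv: "inv_into (Z ` \<U>) h g \<in> Z ` \<U>" "h (inv_into (Z ` \<U>) h g) = g"
    if "g \<in> h ` Z ` \<U>" for g
    using that by (simp_all add: inv_into_into f_inv_into_f)
  show ?thesis
  proof (rule that)
    show "h ` Z ` \<U> \<in> Gamma_f X (\<lambda>x. 0)"
      by (rule gamma_cover_zero_sets_Gamma_f[OF Z_cover h(1,2)])
    show "sel g \<in> \<U>" if "g \<in> h ` Z ` \<U>" for g
      unfolding sel_def by (rule rep(1)[OF inv(1)[OF that]])
    show "x \<in> sel g" if "g \<in> h ` Z ` \<U>" "x \<in> topspace X" "\<bar>g x\<bar> < 1" for g x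
    proof (rule ccontr)
      assume "x \<notin> sel g"
      then have "h (inv_into (Z ` \<U>) h g) x = 1"
        using h(3)[OF inv(1)[OF that(1)]] that(2) unfolding sel_def by blast
      with inv(2)[OF that(1)] that(3) show False by simp
    qed
  qed
qed

lemma Cp_Ufin_zero_imp_X_Ufin_GammaF:
  assumes H: "Cp_Ufin_Gamma_Omega X (\<lambda>x. 0)"
  shows "X_Ufin_GammaF_Omega X"
  unfolding X_Ufin_GammaF_Omega_def
proof (intro allI impI)
  fix \<U> :: "nat \<Rightarrow> 'a set set"
  assume "\<forall>n. \<U> n \<in> Gamma_F X \<and> \<not> (\<exists>\<V>. \<V> \<subseteq> \<U> n \<and> finite \<V> \<and> \<Union>\<V> = topspace X)"
  then have "\<exists>S sel. S \<in> Gamma_f X (\<lambda>x. 0) \<and> (\<forall>g\<in>S. sel g \<in> \<U> n) \<and>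
      (\<forall>g\<in>S. \<forall>x\<in>topspace X. \<bar>g x\<bar> < 1 \<longrightarrow> x \<in> sel g)" for n
    by (metis Gamma_F_separating_functions)
  then obtain S sel where S: "\<And>n. S n \<in> Gamma_f X (\<lambda>x. 0)"
    and sel: "\<And>n g. g \<in> S n \<Longrightarrow> sel n g \<in> \<U> n"
      "\<And>n g x. g \<in> S n \<Longrightarrow> x \<in> topspace X \<Longrightarrow> \<bar>g x\<bar> < 1 \<Longrightarrow> x \<in> sel n g"
    by metis
  from H[unfolded Cp_Ufin_Gamma_Omega_def, rule_format, of S, OF S]
  obtain F where F: "\<And>n. finite (F n)" "\<And>n. F n \<subseteq> S n"
    and F_near: "\<And>K. finite K \<Longrightarrow> K \<subseteq> topspace X \<Longrightarrow> \<exists>n. \<forall>x\<in>K. \<exists>g\<in>F n. \<bar>g x\<bar> < 1"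
    by (metis zero_less_one diff_zero)
  show "\<exists>G. (\<forall>n. finite (G n) \<and> G n \<subseteq> \<U> n) \<and>
      (\<forall>K. finite K \<and> K \<subseteq> topspace X \<longrightarrow> (\<exists>n. K \<subseteq> \<Union>(G n)))"
  proof (intro exI[of _ "\<lambda>n. sel n ` F n"] conjI allI impI)
    show "finite (sel n ` F n)" "sel n ` F n \<subseteq> \<U> n" for n
      using F sel(1) by blast+
    fix K assume K: "finite K \<and> K \<subseteq> topspace X"
    then obtain n where n: "\<forall>x\<in>K. \<exists>g\<in>F n. \<bar>g x\<bar> < 1"
      using F_near by blast
    have "K \<subseteq> \<Union>(sel n ` F n)"
    proof
      fix x assume "x \<in> K"
      with n obtain g where "g \<in> F n" "\<bar>g x\<bar> < 1" by blast
      with K \<open>x \<in> K\<close> F(2) sel(2) show "x \<in> \<Union>(sel n ` F n)" by blast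
    qed
    then show "\<exists>n. K \<subseteq> \<Union>(sel n ` F n)" ..
  qed
qed

lemma no_finite_subcover_imp_gamma_cover:
  assumes "\<Union>\<U> = topspace X"
    and "\<And>x. x \<in> topspace X \<Longrightarrow> finite {U \<in> \<U>. x \<notin> U}"
    and "\<not> has_finite_subcover X \<U>"
  shows "gamma_cover X \<U>"
proof -
  have "topspace X \<notin> \<U>"
  proof
    assume "topspace X \<in> \<U>"
    then have "has_finite_subcover X \<U>"
      unfolding has_finite_subcover_def by (intro exI[of _ "{topspace X}"]) auto
    with assms(3) show False ..
  qed
  moreover have "infinite \<U>"
  proof
    assume "finite \<U>"
    with assms(1) have "has_finite_subcover X \<U>"
      unfolding has_finite_subcover_def by blast
    with assms(3) show False ..
  qed
  ultimately show ?thesis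
    using assms(1,2) unfolding gamma_cover_def is_cover_def by simp
qed

lemma no_finite_subcover_shrink:
  assumes "\<And>U. U \<in> \<U> \<Longrightarrow> F U \<subseteq> U" "\<Union>\<U> = topspace X" "\<not> has_finite_subcover X \<U>"
  shows "\<not> has_finite_subcover X (F ` \<U>)"
proof
  assume "has_finite_subcover X (F ` \<U>)"
  then obtain \<V> where "\<V> \<subseteq> F ` \<U>" "finite \<V>" "\<Union>\<V> = topspace X"
    unfolding has_finite_subcover_def by blast
  then obtain \<W> where \<W>: "\<W> \<subseteq> \<U>" "finite \<W>" "\<Union>(F ` \<W>) = topspace X"
    by (metis finite_subset_image)
  have "\<Union>(F ` \<W>) \<subseteq> \<Union>\<W>" "\<Union>\<W> \<subseteq> \<Union>\<U>"
    using assms(1) \<W>(1) by auto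
  with \<W> assms(2) have "\<Union>\<W> = topspace X" by simp
  with \<W> assms(3) show False unfolding has_finite_subcover_def by blast
qed

lemma gamma_cover_shrink:
  assumes "gamma_cover X \<U>" "\<not> has_finite_subcover X \<U>" "\<And>U. U \<in> \<U> \<Longrightarrow> F U \<subseteq> U"
    and "\<And>x. x \<in> topspace X \<Longrightarrow> finite {U \<in> \<U>. x \<notin> F U}"
  shows "gamma_cover X (F ` \<U>)"
proof (rule no_finite_subcover_imp_gamma_cover)
  have \<U>: "\<Union>\<U> = topspace X" "infinite \<U>"
    using assms(1) unfolding gamma_cover_def is_cover_def by auto
  show "\<Union>(F ` \<U>) = topspace X"
  proof
    show "\<Union>(F ` \<U>) \<subseteq> topspace X"
      using assms(3) \<U>(1) by blast
    show "topspace X \<subseteq> \<Union>(F ` \<U>)"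
    proof
      fix x assume "x \<in> topspace X"
      then have "\<U> - {U \<in> \<U>. x \<notin> F U} \<noteq> {}"
        using assms(4) \<U>(2) by (metis Diff_infinite_finite finite.emptyI)
      then show "x \<in> \<Union>(F ` \<U>)" by blast
    qed
  qed
  show "finite {V \<in> F ` \<U>. x \<notin> V}" if "x \<in> topspace X" for x
  proof (rule finite_subset)
    show "{V \<in> F ` \<U>. x \<notin> V} \<subseteq> F ` {U \<in> \<U>. x \<notin> F U}" by blast
  qed (use assms(4)[OF that] in blast)
  show "\<not> has_finite_subcover X (F ` \<U>)"
    by (rule no_finite_subcover_shrink[OF assms(3) \<U>(1) assms(2)])
qed

lemma Gamma_f_finite_not_close:
  assumes "S \<in> Gamma_f X f" "x \<in> topspace X" "\<epsilon> > 0"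
  shows "finite {g \<in> S. x \<notin> close_points X f \<epsilon> g}"
proof (rule finite_subset)
  show "{g \<in> S. x \<notin> close_points X f \<epsilon> g} \<subseteq> S - cp_nbhd X f {x} \<epsilon>"
    using assms(2) by (auto simp: cp_nbhd_def close_points_def)
  show "finite (S - cp_nbhd X f {x} \<epsilon>)"
    using assms unfolding Gamma_f_def by auto
qed

lemma Gamma_f_close_points_cover:
  assumes "S \<in> Gamma_f X f" "x \<in> topspace X" "\<epsilon> > 0"
  shows "\<exists>g\<in>S. x \<in> close_points X f \<epsilon> g"
proof -
  have "infinite (S - {g \<in> S. x \<notin> close_points X f \<epsilon> g})"
    using assms(1) Gamma_f_finite_not_close[OF assms] unfolding Gamma_f_def by auto
  then obtain g where "g \<in> S - {g \<in> S. x \<notin> close_points X f \<epsilon> g}"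
    using infinite_imp_nonempty by blast
  then show ?thesis by blast
qed

lemma close_points_gamma_cover:
  assumes S: "S \<in> Gamma_f X f" and "\<epsilon> > 0"
    and "\<not> has_finite_subcover X (close_points X f \<epsilon> ` S)"
  shows "gamma_cover X (close_points X f \<epsilon> ` S)"
proof (rule no_finite_subcover_imp_gamma_cover)
  show "\<Union>(close_points X f \<epsilon> ` S) = topspace X"
  proof
    show "\<Union>(close_points X f \<epsilon> ` S) \<subseteq> topspace X"
      by (auto simp: close_points_def)
    show "topspace X \<subseteq> \<Union>(close_points X f \<epsilon> ` S)"
      using Gamma_f_close_points_cover[OF S _ \<open>\<epsilon> > 0\<close>] by blast
  qed
  show "finite {U \<in> close_points X f \<epsilon> ` S. x \<notin> U}" if "x \<in> topspace X" for x
  proof (rule finite_subset)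
    show "{U \<in> close_points X f \<epsilon> ` S. x \<notin> U} \<subseteq>
        close_points X f \<epsilon> ` {g \<in> S. x \<notin> close_points X f \<epsilon> g}"
      by blast
    show "finite (close_points X f \<epsilon> ` {g \<in> S. x \<notin> close_points X f \<epsilon> g})"
      using Gamma_f_finite_not_close[OF S that \<open>\<epsilon> > 0\<close>] by blast
  qed
qed (fact assms(3))

lemma close_points_Gamma_F:
  assumes f: "f \<in> Cfun X" and S: "S \<in> Gamma_f X f" and "\<epsilon> > 0"
    and no_subcover: "\<not> has_finite_subcover X (close_points X f \<epsilon> ` S)"
  shows "close_points X f \<epsilon> ` S \<in> Gamma_F X"
proof -
  define B where "B = close_points X f \<epsilon>"
  define \<U> where "\<U> = B ` S"
  define C where "C U = {x \<in> topspace X. \<bar>inv_into S B U x - f x\<bar> \<le> \<epsilon>/2}" for U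
  have inv: "inv_into S B U \<in> S" "B (inv_into S B U) = U" if "U \<in> \<U>" for U
    using that unfolding \<U>_def by (simp_all add: inv_into_into f_inv_into_f)
  have "S \<subseteq> Cfun X"
    using S by (simp add: Gamma_f_def)
  have dist_cont: "continuous_map X euclideanreal (\<lambda>x. \<bar>g x - f x\<bar>)" if "g \<in> S" for g
    using f \<open>S \<subseteq> Cfun X\<close> that by (intro continuous_intros) (auto simp: Cfun_def)
  have \<U>: "gamma_cover X \<U>" "\<not> has_finite_subcover X \<U>"
    using close_points_gamma_cover[OF S \<open>\<epsilon> > 0\<close> no_subcover] no_subcover
    by (simp_all add: \<U>_def B_def)
  have C_sub: "C U \<subseteq> U" if "U \<in> \<U>" for U
  proof
    fix x assume "x \<in> C U"
    then have "x \<in> B (inv_into S B U)"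
      using \<open>\<epsilon> > 0\<close> by (simp add: C_def B_def close_points_def)
    then show "x \<in> U" using inv(2)[OF that] by simp
  qed
  have "gamma_cover X (C ` \<U>)"
  proof (rule gamma_cover_shrink[OF \<U> C_sub])
    show "finite {U \<in> \<U>. x \<notin> C U}" if "x \<in> topspace X" for x
    proof (rule finite_subset)
      show "{U \<in> \<U>. x \<notin> C U} \<subseteq> B ` {g \<in> S. x \<notin> close_points X f (\<epsilon>/2) g}"
      proof
        fix U assume U: "U \<in> {U \<in> \<U>. x \<notin> C U}"
        then have "x \<notin> close_points X f (\<epsilon>/2) (inv_into S B U)"
          by (auto simp: C_def close_points_def)
        with U inv show "U \<in> B ` {g \<in> S. x \<notin> close_points X f (\<epsilon>/2) g}"
          by (metis (mono_tags, lifting) image_eqI mem_Collect_eq)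
      qed
      show "finite (B ` {g \<in> S. x \<notin> close_points X f (\<epsilon>/2) g})"
        using Gamma_f_finite_not_close[OF S that, of "\<epsilon>/2"] \<open>\<epsilon> > 0\<close> by simp
    qed
  qed
  moreover have "cozero_set X U" if U: "U \<in> \<U>" for U
  proof -
    obtain g where "g \<in> S" "U = B g"
      using U unfolding \<U>_def by blast
    then show ?thesis
      unfolding B_def close_points_def by (simp add: cozero_set_sublevel dist_cont)
  qed
  moreover have "zero_set X (C U)" if "U \<in> \<U>" for U
    unfolding C_def by (rule zero_set_sublevel[OF dist_cont[OF inv(1)[OF that]]])
  ultimately have "\<U> \<in> Gamma_F X"
    unfolding Gamma_F_def using \<U>(1) C_sub by (intro CollectI conjI ballI exI[of _ C]) auto
  then show ?thesis by (simp add: \<U>_def B_def)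
qed

lemma X_Ufin_GammaF_OmegaD:
  fixes \<U> :: "nat \<Rightarrow> 'a set set"
  assumes "X_Ufin_GammaF_Omega X" "\<And>n. \<U> n \<in> Gamma_F X" "\<And>n. \<not> has_finite_subcover X (\<U> n)"
  obtains G where "\<And>n. finite (G n)" "\<And>n. G n \<subseteq> \<U> n"
    and "\<And>K. finite K \<Longrightarrow> K \<subseteq> topspace X \<Longrightarrow> \<exists>n. K \<subseteq> \<Union>(G n)"
  using assms unfolding X_Ufin_GammaF_Omega_def has_finite_subcover_def by metis

lemma X_Ufin_GammaF_Omega_cofinal:
  fixes \<U> :: "nat \<Rightarrow> 'a set set"
  assumes H: "X_Ufin_GammaF_Omega X"
    and \<U>: "\<And>n. \<U> n \<in> Gamma_F X" "\<And>n. \<not> has_finite_subcover X (\<U> n)"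
  obtains G where "\<And>n. finite (G n)" "\<And>n. G n \<subseteq> \<U> n"
    and "\<And>K N. finite K \<Longrightarrow> K \<subseteq> topspace X \<Longrightarrow> \<exists>n\<ge>N. K \<subseteq> \<Union>(G n)"
proof -
  obtain G where G: "\<And>n. finite (G n)" "\<And>n. G n \<subseteq> \<U> n"
    and G_cover: "\<And>K. finite K \<Longrightarrow> K \<subseteq> topspace X \<Longrightarrow> \<exists>n. K \<subseteq> \<Union>(G n)"
    using X_Ufin_GammaF_OmegaD[where \<U> = \<U>, OF H \<U>] by metis
  have "\<exists>x \<in> topspace X. x \<notin> \<Union>(G n)" for n
  proof -
    have "\<Union>(\<U> n) = topspace X"
      using \<U>(1)[of n] by (simp add: Gamma_F_def gamma_cover_def is_cover_def)
    then have "\<Union>(G n) \<subseteq> topspace X"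
      using G(2)[of n] by blast
    moreover have "\<Union>(G n) \<noteq> topspace X"
      using G(1)[of n] G(2)[of n] \<U>(2)[of n] unfolding has_finite_subcover_def by blast
    ultimately show ?thesis by blast
  qed
  then obtain p where p: "\<And>n. p n \<in> topspace X" "\<And>n. p n \<notin> \<Union>(G n)"
    by metis
  \<comment> \<open>Adding the points \<open>p 0, \<dots>, p (N - 1)\<close> to \<open>K\<close> forces a covering index \<open>\<ge> N\<close>.\<close>
  have cofinal: "\<exists>n\<ge>N. K \<subseteq> \<Union>(G n)" if "finite K" "K \<subseteq> topspace X" for K N
  proof -
    have "finite (K \<union> p ` {..<N})" "K \<union> p ` {..<N} \<subseteq> topspace X"
      using that p(1) by auto
    then obtain n where n: "K \<union> p ` {..<N} \<subseteq> \<Union>(G n)"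
      using G_cover by meson
    have "n \<ge> N"
    proof (rule ccontr)
      assume "\<not> N \<le> n"
      then have "p n \<in> p ` {..<N}" by simp
      with n p(2)[of n] show False by blast
    qed
    with n show ?thesis by blast
  qed
  show ?thesis
    by (rule that[OF G cofinal])
qed

lemma X_Ufin_GammaF_Omega_select:
  fixes \<U> :: "nat \<Rightarrow> 'a set set"
  assumes H: "X_Ufin_GammaF_Omega X"
    and \<U>: "\<And>n. has_finite_subcover X (\<U> n) \<or> \<U> n \<in> Gamma_F X"
  obtains G where "\<And>n. finite (G n)" "\<And>n. G n \<subseteq> \<U> n"
    and "\<And>K N. finite K \<Longrightarrow> K \<subseteq> topspace X \<Longrightarrow> \<exists>n\<ge>N. K \<subseteq> \<Union>(G n)"
proof -
  have "\<forall>n. \<exists>\<V>. has_finite_subcover X (\<U> n) \<longrightarrow>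
      finite \<V> \<and> \<V> \<subseteq> \<U> n \<and> \<Union>\<V> = topspace X"
    unfolding has_finite_subcover_def by blast
  then obtain sub where sub: "\<And>n. has_finite_subcover X (\<U> n) \<Longrightarrow>
      finite (sub n) \<and> sub n \<subseteq> \<U> n \<and> \<Union>(sub n) = topspace X"
    by metis
  show ?thesis
  proof (cases "\<forall>n. has_finite_subcover X (\<U> n)")
    case True
    show ?thesis
    proof (rule that)
      show "finite (sub n)" "sub n \<subseteq> \<U> n" for n
        using sub True by blast+
      show "\<exists>n\<ge>N. K \<subseteq> \<Union>(sub n)" if "finite K" "K \<subseteq> topspace X" for K N
        using sub True that(2) by blast
    qed
  next
    case False
    then obtain n\<^sub>0 where n\<^sub>0: "\<not> has_finite_subcover X (\<U> n\<^sub>0)" by blast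
    \<comment> \<open>Replace the members with a finite subcover by \<open>\<U> n\<^sub>0\<close>; they are covered by \<open>sub\<close> anyway.\<close>
    define W where "W n = (if has_finite_subcover X (\<U> n) then \<U> n\<^sub>0 else \<U> n)" for n
    have W: "W n \<in> Gamma_F X" "\<not> has_finite_subcover X (W n)" for n
      using \<U>[of n] \<U>[of n\<^sub>0] n\<^sub>0 by (auto simp: W_def)
    obtain G where G: "\<And>n. finite (G n)" "\<And>n. G n \<subseteq> W n"
      and G_cover: "\<And>K N. finite K \<Longrightarrow> K \<subseteq> topspace X \<Longrightarrow> \<exists>n\<ge>N. K \<subseteq> \<Union>(G n)"
      using X_Ufin_GammaF_Omega_cofinal[of X W, OF H W] by blast
    define G' where "G' n = (if has_finite_subcover X (\<U> n) then sub n else G n)" for n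
    show ?thesis
    proof (rule that)
      show "finite (G' n)" "G' n \<subseteq> \<U> n" for n
        using sub[of n] G[of n] by (auto simp: G'_def W_def)
      show "\<exists>n\<ge>N. K \<subseteq> \<Union>(G' n)" if "finite K" "K \<subseteq> topspace X" for K N
        using G_cover[OF that, of N] sub that(2) by (metis G'_def)
    qed
  qed
qed

lemma X_Ufin_GammaF_imp_Cp_Ufin:
  assumes H: "X_Ufin_GammaF_Omega X" and f: "f \<in> Cfun X"
  shows "Cp_Ufin_Gamma_Omega X f"
  unfolding Cp_Ufin_Gamma_Omega_def
proof (intro allI impI)
  fix S :: "nat \<Rightarrow> ('a \<Rightarrow> real) set"
  assume S: "\<forall>n. S n \<in> Gamma_f X f"
  define e where "e n = inverse (real (Suc n))" for n
  define B where "B n = close_points X f (e n)" for n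
  have "e n > 0" for n
    by (simp add: e_def)
  then have alt: "has_finite_subcover X (B n ` S n) \<or> B n ` S n \<in> Gamma_F X" for n
    using close_points_Gamma_F[OF f spec[OF S, of n]] by (auto simp: B_def)
  obtain G where G: "\<And>n. finite (G n)" "\<And>n. G n \<subseteq> B n ` S n"
    and G_cover: "\<And>K N. finite K \<Longrightarrow> K \<subseteq> topspace X \<Longrightarrow> \<exists>n\<ge>N. K \<subseteq> \<Union>(G n)"
    using X_Ufin_GammaF_Omega_select[of X "\<lambda>n. B n ` S n", OF H alt] by blast
  define F where "F n = inv_into (S n) (B n) ` G n" for n
  show "\<exists>F. (\<forall>n. finite (F n) \<and> F n \<subseteq> S n) \<and>
      (\<forall>K \<epsilon>. finite K \<and> K \<subseteq> topspace X \<and> \<epsilon> > 0 \<longrightarrow> (\<exists>n. \<forall>x\<in>K. \<exists>g\<in>F n. \<bar>g x - f x\<bar> < \<epsilon>))"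
  proof (intro exI[of _ F] conjI allI impI)
    show "finite (F n)" for n
      by (simp add: F_def G(1))
    show "F n \<subseteq> S n" for n
      using G(2)[of n] unfolding F_def by (meson image_subsetI inv_into_into subsetD)
    fix K and \<epsilon> :: real
    assume K: "finite K \<and> K \<subseteq> topspace X \<and> \<epsilon> > 0"
    then obtain N where N: "e N < \<epsilon>"
      using reals_Archimedean[of \<epsilon>] unfolding e_def by blast
    obtain n where "n \<ge> N" and n: "K \<subseteq> \<Union>(G n)"
      using G_cover K by blast
    then have "e n \<le> e N"
      by (simp add: e_def le_imp_inverse_le)
    show "\<exists>n. \<forall>x\<in>K. \<exists>g\<in>F n. \<bar>g x - f x\<bar> < \<epsilon>"
    proof (intro exI[of _ n] ballI)
      fix x assume "x \<in> K"
      then obtain U where U: "U \<in> G n" "x \<in> U" using n by blast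
      define g where "g = inv_into (S n) (B n) U"
      have "B n g = U"
        using f_inv_into_f[of U "B n" "S n"] G(2)[of n] U(1) unfolding g_def by blast
      with U(2) have "x \<in> B n g" by simp
      then have "\<bar>g x - f x\<bar> < \<epsilon>"
        using \<open>e n \<le> e N\<close> N by (simp add: B_def close_points_def)
      then show "\<exists>g\<in>F n. \<bar>g x - f x\<bar> < \<epsilon>"
        using U(1) unfolding F_def g_def by blast
    qed
  qed
qed

theorem mainTheorem13:
  fixes X :: "'a topology"
  assumes "tychonoff_space X"
  shows "(\<forall>f\<in>Cfun X. Cp_Ufin_Gamma_Omega X f) \<longleftrightarrow> X_Ufin_GammaF_Omega X"
  \<comment> \<open>Neither direction uses the Tychonoff hypothesis: zero- and cozero-sets are given by real functions directly.\<close>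
proof
  assume "\<forall>f\<in>Cfun X. Cp_Ufin_Gamma_Omega X f"
  moreover have "(\<lambda>x. 0) \<in> Cfun X"
    by (simp add: Cfun_def)
  ultimately show "X_Ufin_GammaF_Omega X"
    by (blast intro: Cp_Ufin_zero_imp_X_Ufin_GammaF)
next
  assume "X_Ufin_GammaF_Omega X"
  then show "\<forall>f\<in>Cfun X. Cp_Ufin_Gamma_Omega X f"
    by (blast intro: X_Ufin_GammaF_imp_Cp_Ufin)
qed

end
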